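(* Let $\mathcal{F}$ be a class of real functions on $\mathcal{X}$ and $(\mathbf{X}_i,Y_i)_{i=1}^n$ a sample. Let $\widehat g_1,\dots,\widehat g_d$ be $\Delta_1$-empirical risk minimizers in $\mathcal{F}$, and let $\widehat f$ be a $\Delta_2$-empirical risk minimizer in $Star_d(\mathcal{F},\widehat g_1,\dots,\widehat g_d)$. Then for any $h\in\mathcal{F}$, with $c=\frac1{36}$, $$\widehat{\mathbb{E}}(h-Y)^2-\widehat{\mathbb{E}}(\widehat f-Y)^2\ge c\,\widehat{\mathbb{E}}(\widehat f-h)^2-2(1+c)[\Delta_1+\Delta_2].$$
   Context: $\widehat{\mathbb{E}}(f)=\frac1n\sum_{i=1}^n f(\mathbf{X}_i)$ (and $\widehat{\mathbb{E}}(f-Y)^2=\frac1n\sum_i(f(\mathbf{X}_i)-Y_i)^2$). $\widehat g\in\mathcal{G}$ is a $\Delta$-empirical risk minimizer in $\mathcal{G}$ if $\widehat{\mathbb{E}}(\widehat g-Y)^2\le\min_{f\in\mathcal{G}}\widehat{\mathbb{E}}(f-Y)^2+\Delta$. $Star_d(\mathcal{F},\widehat g_1,\dots,\widehat g_d)=\{\sum_{i=1}^d\lambda_i\widehat g_i+(1-\sum_i\lambda_i)f:\lambda_i\in[0,1],\ 1-\sum_i\lambda_i\in[0,1],\ f\in\mathcal{F}\}$. *)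

theory Defs
  imports "HOL-Analysis.Analysis"
begin

definition emp_mean :: "nat \<Rightarrow> (nat \<Rightarrow> 'a) \<Rightarrow> ('a \<Rightarrow> real) \<Rightarrow> real" where
  "emp_mean n X f = (\<Sum>i=1..n. f (X i)) / real n"

definition emp_risk :: "nat \<Rightarrow> (nat \<Rightarrow> 'a) \<Rightarrow> (nat \<Rightarrow> real) \<Rightarrow> ('a \<Rightarrow> real) \<Rightarrow> real" where
  "emp_risk n X Y f = (\<Sum>i=1..n. (f (X i) - Y i)^2) / real n"

definition is_erm :: "nat \<Rightarrow> (nat \<Rightarrow> 'a) \<Rightarrow> (nat \<Rightarrow> real) \<Rightarrow> real \<Rightarrow> ('a \<Rightarrow> real) set \<Rightarrow> ('a \<Rightarrow> real) \<Rightarrow> bool" where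
  "is_erm n X Y \<Delta> G g \<longleftrightarrow> g \<in> G \<and> (\<forall>f\<in>G. emp_risk n X Y g \<le> emp_risk n X Y f + \<Delta>)"

definition star_d :: "nat \<Rightarrow> ('a \<Rightarrow> real) set \<Rightarrow> (nat \<Rightarrow> ('a \<Rightarrow> real)) \<Rightarrow> ('a \<Rightarrow> real) set" where
  "star_d d F g = {(\<lambda>x. (\<Sum>i=1..d. lam i * g i x) + (1 - (\<Sum>i=1..d. lam i)) * f x) | lam f.
      (\<forall>i\<in>{1..d}. 0 \<le> lam i \<and> lam i \<le> 1) \<and> 0 \<le> 1 - (\<Sum>i=1..d. lam i) \<and> 1 - (\<Sum>i=1..d. lam i) \<le> 1 \<and> f \<in> F}"

end

theory Submission
  imports Defs
begin

text \<open>Write \<open>fhat = t \<alpha> + (1 - t) f\<close> with \<open>\<alpha>\<close> a convex combination of the \<open>g i\<close> and \<open>f \<in> F\<close>.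
  Both midpoints \<open>(\<alpha> + fhat)/2\<close> and \<open>(\<alpha> + h)/2\<close> lie in the star, so near-minimality of \<open>fhat\<close>
  and the parallelogram identity for the empirical risk bound the empirical squared distances
  from \<open>\<alpha>\<close> to \<open>fhat\<close> and to \<open>h\<close> by the excess risk of \<open>fhat\<close> over \<open>h\<close>, once convexity of the
  risk and near-minimality of the \<open>g i\<close> show that the risk of \<open>\<alpha>\<close> exceeds that of \<open>h\<close> by at
  most \<open>\<Delta>1\<close>. The triangle inequality for the squared distance then gives the bound with
  constant \<open>1/12\<close> in place of \<open>1/36\<close>.\<close>

lemma is_erm_nonneg: "is_erm n X Y \<Delta> G g \<Longrightarrow> 0 \<le> \<Delta>"
  unfolding is_erm_def by fastforce

lemma emp_mean_nonneg: "(\<And>x. 0 \<le> f x) \<Longrightarrow> 0 \<le> emp_mean n X f"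
  unfolding emp_mean_def by (simp add: sum_nonneg)

lemma emp_risk_midpoint:
  "emp_risk n X Y (\<lambda>x. (f x + k x) / 2)
     = (emp_risk n X Y f + emp_risk n X Y k) / 2 - emp_mean n X (\<lambda>x. (f x - k x)^2) / 4"
proof -
  have "(\<Sum>i=1..n. ((f (X i) + k (X i)) / 2 - Y i)^2)
      = (\<Sum>i=1..n. (f (X i) - Y i)^2 / 2 + (k (X i) - Y i)^2 / 2 - (f (X i) - k (X i))^2 / 4)"
    by (rule sum.cong) (auto simp: power2_eq_square field_simps)
  also have "\<dots> = (\<Sum>i=1..n. (f (X i) - Y i)^2) / 2 + (\<Sum>i=1..n. (k (X i) - Y i)^2) / 2
      - (\<Sum>i=1..n. (f (X i) - k (X i))^2) / 4"
    by (simp add: sum.distrib sum_subtractf sum_divide_distrib)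
  finally show ?thesis
    unfolding emp_risk_def emp_mean_def by (simp add: diff_divide_distrib add_divide_distrib)
qed

lemma emp_mean_sq_diff_triangle:
  "emp_mean n X (\<lambda>x. (f x - k x)^2)
     \<le> 2 * emp_mean n X (\<lambda>x. (f x - m x)^2) + 2 * emp_mean n X (\<lambda>x. (m x - k x)^2)"
proof -
  have "(a - c)^2 \<le> 2 * (a - b)^2 + 2 * (b - c)^2" for a b c :: real
    using zero_le_power2[of "a - 2 * b + c"] by (simp add: power2_eq_square algebra_simps)
  then have "(\<Sum>i=1..n. (f (X i) - k (X i))^2)
      \<le> (\<Sum>i=1..n. 2 * (f (X i) - m (X i))^2 + 2 * (m (X i) - k (X i))^2)"
    by (intro sum_mono)
  then show ?thesis
    unfolding emp_mean_def
    by (simp add: sum.distrib sum_distrib_left divide_right_mono flip: add_divide_distrib)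
qed

lemma emp_risk_convex_comb_le:
  assumes "finite A" "\<forall>j\<in>A. 0 \<le> w j" "(\<Sum>j\<in>A. w j) = 1"
  shows "emp_risk n X Y (\<lambda>x. \<Sum>j\<in>A. w j * g j x) \<le> (\<Sum>j\<in>A. w j * emp_risk n X Y (g j))"
proof -
  have "A \<noteq> {}" using assms(3) by auto
  have pointwise: "((\<Sum>j\<in>A. w j * g j (X i)) - Y i)^2 \<le> (\<Sum>j\<in>A. w j * (g j (X i) - Y i)^2)" for i
  proof -
    have "(\<Sum>j\<in>A. w j * g j (X i)) - Y i = (\<Sum>j\<in>A. w j * (g j (X i) - Y i))"
      using assms(3) by (simp add: right_diff_distrib sum_subtractf flip: sum_distrib_right)
    then show ?thesis
      using convex_on_sum[OF assms(1) \<open>A \<noteq> {}\<close> convex_power2 assms(3), of "\<lambda>j. g j (X i) - Y i"] assms(2)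
      by simp
  qed
  have "(\<Sum>i=1..n. ((\<Sum>j\<in>A. w j * g j (X i)) - Y i)^2) \<le> (\<Sum>i=1..n. \<Sum>j\<in>A. w j * (g j (X i) - Y i)^2)"
    by (intro sum_mono pointwise)
  also have "\<dots> = (\<Sum>j\<in>A. w j * (\<Sum>i=1..n. (g j (X i) - Y i)^2))"
    by (subst sum.swap) (simp add: sum_distrib_left)
  finally show ?thesis
    unfolding emp_risk_def
    by (simp only: divide_right_mono sum_divide_distrib[symmetric] times_divide_eq_right)
qed

lemma star_d_intro:
  assumes "0 \<le> t" "t \<le> 1" "\<forall>j\<in>{1..d}. 0 \<le> w j" "(\<Sum>j=1..d. w j) = 1" "f \<in> F"
  shows "(\<lambda>x. t * (\<Sum>j=1..d. w j * g j x) + (1 - t) * f x) \<in> star_d d F g"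
proof -
  define lam where "lam j = t * w j" for j
  have "w j \<le> 1" if "j \<in> {1..d}" for j
    using member_le_sum[of j "{1..d}" w] that assms(3,4) by simp
  then have "\<forall>j\<in>{1..d}. 0 \<le> lam j \<and> lam j \<le> 1"
    using assms(1-3) by (auto simp: lam_def intro: mult_le_one)
  moreover have "(\<Sum>j=1..d. lam j) = t"
    using assms(4) by (simp add: lam_def flip: sum_distrib_left)
  moreover have "t * (\<Sum>j=1..d. w j * g j x) = (\<Sum>j=1..d. lam j * g j x)" for x
    by (simp add: lam_def sum_distrib_left mult.assoc)
  ultimately show ?thesis
    unfolding star_d_def using assms(1,2,5) by force
qed

lemma star_d_elim:
  assumes "\<phi> \<in> star_d d F g" "d \<ge> 1"
  obtains t w f where "0 \<le> t" "t \<le> 1" "\<forall>j\<in>{1..d}. 0 \<le> w j" "(\<Sum>j=1..d. w j) = 1" "f \<in> F"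
    "\<phi> = (\<lambda>x. t * (\<Sum>j=1..d. w j * g j x) + (1 - t) * f x)"
proof -
  obtain lam f where \<phi>: "\<phi> = (\<lambda>x. (\<Sum>j=1..d. lam j * g j x) + (1 - (\<Sum>j=1..d. lam j)) * f x)"
    and lam: "\<forall>j\<in>{1..d}. 0 \<le> lam j" and "(\<Sum>j=1..d. lam j) \<le> 1" and "f \<in> F"
    using assms(1) unfolding star_d_def by auto
  define t where "t = (\<Sum>j=1..d. lam j)"
  \<comment> \<open>if \<open>t = 0\<close> all weights vanish and any point of the simplex will do\<close>
  define w where "w j = (if t = 0 then of_bool (j = 1) else lam j / t)" for j
  have "0 \<le> t" unfolding t_def using lam by (intro sum_nonneg) auto
  have "(\<Sum>j=1..d. w j) = 1"
  proof (cases "t = 0")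
    case True
    then show ?thesis using assms(2) by (simp add: w_def)
  next
    case False
    then show ?thesis by (simp add: w_def t_def flip: sum_divide_distrib)
  qed
  moreover have "\<forall>j\<in>{1..d}. 0 \<le> w j"
    using lam \<open>0 \<le> t\<close> by (simp add: w_def)
  moreover have "lam j = t * w j" if "j \<in> {1..d}" for j
    using lam that sum_nonneg_eq_0_iff[of "{1..d}" lam] by (auto simp: w_def t_def)
  then have "(\<Sum>j=1..d. lam j * g j x) = t * (\<Sum>j=1..d. w j * g j x)" for x
    by (simp add: sum_distrib_left mult.assoc)
  then have "\<phi> = (\<lambda>x. t * (\<Sum>j=1..d. w j * g j x) + (1 - t) * f x)"
    unfolding \<phi> t_def by simp
  ultimately show thesis
    using that \<open>0 \<le> t\<close> \<open>(\<Sum>j=1..d. lam j) \<le> 1\<close> \<open>f \<in> F\<close> t_def by blast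
qed

lemma erm_in_star_excess_risk_ge:
  assumes "d \<ge> 1" "\<forall>i\<in>{1..d}. is_erm n X Y \<Delta>1 F (g i)"
    and "is_erm n X Y \<Delta>2 (star_d d F g) fhat" "h \<in> F"
  shows "emp_risk n X Y h - emp_risk n X Y fhat
     \<ge> emp_mean n X (\<lambda>x. (fhat x - h x)^2) / 12 - 2/3 * \<Delta>1 - 4/3 * \<Delta>2"
proof -
  define R where "R = emp_risk n X Y"
  define D where "D f k = emp_mean n X (\<lambda>x. (f x - k x)^2)" for f k :: "'a \<Rightarrow> real"
  have fhat_min: "R fhat \<le> R q + \<Delta>2" if "q \<in> star_d d F g" for q
    using assms(3) that unfolding is_erm_def R_def by blast
  have "fhat \<in> star_d d F g"
    using assms(3) unfolding is_erm_def by blast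
  then obtain t w f where t: "0 \<le> t" "t \<le> 1" and w: "\<forall>j\<in>{1..d}. 0 \<le> w j" "(\<Sum>j=1..d. w j) = 1"
    and "f \<in> F" and fhat: "fhat = (\<lambda>x. t * (\<Sum>j=1..d. w j * g j x) + (1 - t) * f x)"
    using assms(1) by (rule star_d_elim)
  define \<alpha> where "\<alpha> x = (\<Sum>j=1..d. w j * g j x)" for x
  have "(\<lambda>x. (\<alpha> x + fhat x) / 2) = (\<lambda>x. (1 + t) / 2 * \<alpha> x + (1 - (1 + t) / 2) * f x)"
    by (auto simp: fhat \<alpha>_def field_simps)
  then have mid_fhat: "(\<lambda>x. (\<alpha> x + fhat x) / 2) \<in> star_d d F g"
    using star_d_intro[OF _ _ w \<open>f \<in> F\<close>, of "(1 + t) / 2"] t unfolding \<alpha>_def by simp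
  have near_fhat: "R fhat \<le> (R \<alpha> + R fhat) / 2 - D \<alpha> fhat / 4 + \<Delta>2"
    using fhat_min[OF mid_fhat] emp_risk_midpoint[of n X Y \<alpha> fhat] unfolding R_def D_def by linarith
  have mid_h: "(\<lambda>x. (\<alpha> x + h x) / 2) \<in> star_d d F g"
    using star_d_intro[OF _ _ w assms(4), of "1/2"] unfolding \<alpha>_def by (simp add: add_divide_distrib)
  have near_h: "R fhat \<le> (R \<alpha> + R h) / 2 - D \<alpha> h / 4 + \<Delta>2"
    using fhat_min[OF mid_h] emp_risk_midpoint[of n X Y \<alpha> h] unfolding R_def D_def by linarith
  have "R \<alpha> \<le> (\<Sum>j=1..d. w j * R (g j))"
    unfolding R_def \<alpha>_def using emp_risk_convex_comb_le[OF _ w] by simp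
  also have "\<dots> \<le> (\<Sum>j=1..d. w j * (R h + \<Delta>1))"
    using assms(2,4) w(1) unfolding is_erm_def R_def by (intro sum_mono mult_left_mono) auto
  also have "\<dots> = R h + \<Delta>1"
    using w(2) by (simp flip: sum_distrib_right)
  finally have "R \<alpha> \<le> R h + \<Delta>1" .
  moreover have "D fhat h \<le> 2 * D fhat \<alpha> + 2 * D \<alpha> h"
    unfolding D_def by (rule emp_mean_sq_diff_triangle)
  moreover have "D fhat \<alpha> = D \<alpha> fhat"
    unfolding D_def by (simp add: power2_commute)
  ultimately have "R h - R fhat \<ge> D fhat h / 12 - 2/3 * \<Delta>1 - 4/3 * \<Delta>2"
    using near_fhat near_h by argo
  then show ?thesis
    unfolding R_def D_def .
qed

theorem lemma2:
  fixes F :: "('a \<Rightarrow> real) set" and X :: "nat \<Rightarrow> 'a" and Y :: "nat \<Rightarrow> real"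
    and n d :: nat and g :: "nat \<Rightarrow> ('a \<Rightarrow> real)" and fhat h :: "'a \<Rightarrow> real"
    and \<Delta>1 \<Delta>2 :: real
  assumes "n \<ge> 1" and "d \<ge> 1"
    and "\<forall>i\<in>{1..d}. is_erm n X Y \<Delta>1 F (g i)"
    and "is_erm n X Y \<Delta>2 (star_d d F g) fhat"
    and "h \<in> F"
  shows "emp_risk n X Y h - emp_risk n X Y fhat
     \<ge> (1/36) * emp_mean n X (\<lambda>x. (fhat x - h x)^2) - 2 * (1 + 1/36) * (\<Delta>1 + \<Delta>2)"
proof -
  have "0 \<le> \<Delta>1" using assms(2,3) is_erm_nonneg by fastforce
  moreover have "0 \<le> \<Delta>2" using assms(4) by (rule is_erm_nonneg)
  moreover have "0 \<le> emp_mean n X (\<lambda>x. (fhat x - h x)^2)" by (simp add: emp_mean_nonneg)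
  moreover have "2 * (1 + 1/36) * (\<Delta>1 + \<Delta>2) = 37/18 * \<Delta>1 + 37/18 * \<Delta>2"
    by simp
  ultimately show ?thesis
    using erm_in_star_excess_risk_ge[OF assms(2-5)] by linarith
qed

end
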